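(* Let $R$ be a $d\times d$ expansive integer matrix, $B\subset\mathbb{Z}^d$ finite with $0\in B$, $N:=|B|$, $L\subset\mathbb{Z}^d$ finite with $0\in L$, and $(\alpha_l)_{l\in L}$ nonzero complex numbers such that the matrix $\frac{1}{\sqrt N}\left(e^{2\pi i (R^T)^{-1}l\cdot b}\alpha_l\right)_{l\in L,b\in B}$ has orthonormal columns. Then: (i) $N\le\#[L]$; (ii) for every $l_0\in L$, $\sum_{l\in L,\ l\in[l_0]}|\alpha_l|^2\le1$.
   Context: For $k\in\mathbb{Z}^d$, $[k]:=\{k'\in\mathbb{Z}^d : (k'-k)\cdot R^{-1}b\in\mathbb{Z}\text{ for all }b\in B\}$, and $[L]:=\{[l]: l\in L\}$ is the set of distinct classes of elements of $L$; $\#[L]$ is its cardinality. A matrix is expansive if all eigenvalues have modulus $>1$. *)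

theory Defs
  imports "HOL-Analysis.Analysis"
begin

text \<open>Integer vectors in Z^d are int^'n; dimension d = CARD('n).\<close>

definition rvec :: "int^'n \<Rightarrow> real^'n" where
  "rvec v = (\<chi> i. real_of_int (v $ i))"

definition rmat :: "int^'n^'n \<Rightarrow> real^'n^'n" where
  "rmat R = (\<chi> i j. real_of_int (R $ i $ j))"

definition cmat :: "int^'n^'n \<Rightarrow> complex^'n^'n" where
  "cmat R = (\<chi> i j. complex_of_int (R $ i $ j))"

definition expansive :: "int^'n^'n \<Rightarrow> bool" where
  "expansive R \<longleftrightarrow>
     (\<forall>z::complex. det (mat z - cmat R) = 0 \<longrightarrow> norm z > 1)"

definition cls :: "int^'n^'n \<Rightarrow> (int^'n) set \<Rightarrow> int^'n \<Rightarrow> (int^'n) set" where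
  "cls R B k = {k'. \<forall>b\<in>B. (rvec (k' - k)) \<bullet> (matrix_inv (rmat R) *v rvec b) \<in> \<int>}"

end

theory Submission
  imports Defs
begin

text \<open>
  Let \<open>e(l,b) = exp (2\<pi>i (R\<^sup>T)\<^sup>-\<^sup>1 l \<cdot> b)\<close> and let \<open>M\<close> be the matrix with entries
  \<open>e(l,b) \<alpha> l / \<surd>N\<close>. If \<open>l \<in> [l0]\<close> then \<open>e(l,b) = e(l0,b)\<close> for all \<open>b \<in> B\<close>, so the rows of \<open>M\<close>
  indexed by the class of \<open>l0\<close> are the multiples \<open>\<alpha> l / \<surd>N\<close> of the unimodular vector
  \<open>u = e(l0,\<cdot>)\<close>. Having orthonormal columns, \<open>M\<close> is an isometry, hence
  \<open>N = \<parallel>cnj u\<parallel>\<^sup>2 = \<parallel>M (cnj u)\<parallel>\<^sup>2 \<ge> N \<Sum>{|\<alpha> l|\<^sup>2 | l \<in> [l0]}\<close>, which is (ii).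
  The column \<open>b = 0\<close> is a unit vector, i.e. \<open>\<Sum>{|\<alpha> l|\<^sup>2 | l \<in> L} = N\<close>; splitting this sum by
  classes and bounding each class by (ii) gives (i).
\<close>

lemma sum_norm_square_orthonormal_columns:
  fixes m :: "'l \<Rightarrow> 'b \<Rightarrow> complex"
  assumes "finite B"
    and orth: "\<forall>b\<in>B. \<forall>b'\<in>B. (\<Sum>l\<in>L. m l b * cnj (m l b')) = (if b = b' then 1 else 0)"
  shows "(\<Sum>l\<in>L. (norm (\<Sum>b\<in>B. x b * m l b))\<^sup>2) = (\<Sum>b\<in>B. (norm (x b))\<^sup>2)"
proof -
  have "complex_of_real (\<Sum>l\<in>L. (norm (\<Sum>b\<in>B. x b * m l b))\<^sup>2)
      = (\<Sum>l\<in>L. \<Sum>b\<in>B. \<Sum>b'\<in>B. x b * cnj (x b') * (m l b * cnj (m l b')))"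
    unfolding of_real_sum complex_norm_square by (simp add: cnj_sum sum_product algebra_simps)
  also have "\<dots> = (\<Sum>b\<in>B. \<Sum>b'\<in>B. x b * cnj (x b') * (\<Sum>l\<in>L. m l b * cnj (m l b')))"
    by (simp add: sum.swap[of _ L] sum_distrib_left)
  also have "\<dots> = (\<Sum>b\<in>B. \<Sum>b'\<in>B. x b * cnj (x b') * (if b = b' then 1 else 0))"
    using orth by (intro sum.cong refl) simp
  also have "\<dots> = (\<Sum>b\<in>B. x b * cnj (x b))"
    using \<open>finite B\<close> by (simp add: if_distrib sum.delta cong: if_cong)
  also have "\<dots> = complex_of_real (\<Sum>b\<in>B. (norm (x b))\<^sup>2)"
    unfolding of_real_sum complex_norm_square ..
  finally show ?thesis
    using of_real_eq_iff by blast
qed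

lemma sum_norm_square_orthonormal_column:
  fixes m :: "'l \<Rightarrow> 'b \<Rightarrow> complex"
  assumes "b \<in> B"
    and orth: "\<forall>b\<in>B. \<forall>b'\<in>B. (\<Sum>l\<in>L. m l b * cnj (m l b')) = (if b = b' then 1 else 0)"
  shows "(\<Sum>l\<in>L. (norm (m l b))\<^sup>2) = 1"
proof -
  have "complex_of_real (\<Sum>l\<in>L. (norm (m l b))\<^sup>2) = 1"
    using orth \<open>b \<in> B\<close> unfolding of_real_sum complex_norm_square by simp
  then show ?thesis
    using of_real_eq_1_iff by blast
qed

lemma sum_norm_square_rows_common_phase_le:
  fixes m :: "'l \<Rightarrow> 'b \<Rightarrow> complex"
  assumes "finite L" "finite B" "C \<subseteq> L"
    and orth: "\<forall>b\<in>B. \<forall>b'\<in>B. (\<Sum>l\<in>L. m l b * cnj (m l b')) = (if b = b' then 1 else 0)"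
    and rows: "\<forall>l\<in>C. \<forall>b\<in>B. m l b = u b * \<beta> l"
    and unimodular: "\<forall>b\<in>B. norm (u b) = 1"
  shows "real (card B) * (\<Sum>l\<in>C. (norm (\<beta> l))\<^sup>2) \<le> 1"
proof -
  define v where "v l = (\<Sum>b\<in>B. cnj (u b) * m l b)" for l
  have v_row: "v l = of_nat (card B) * \<beta> l" if "l \<in> C" for l
  proof -
    have "cnj (u b) * m l b = \<beta> l" if "b \<in> B" for b
    proof -
      have "cnj (u b) * u b = 1"
        using unimodular \<open>b \<in> B\<close> complex_norm_square[of "u b"] by (simp add: mult.commute)
      then show ?thesis
        using rows \<open>l \<in> C\<close> \<open>b \<in> B\<close> by (simp add: mult.assoc[symmetric])
    qed
    then show ?thesis
      unfolding v_def by simp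
  qed
  have "(real (card B))\<^sup>2 * (\<Sum>l\<in>C. (norm (\<beta> l))\<^sup>2) = (\<Sum>l\<in>C. (norm (v l))\<^sup>2)"
    by (simp add: sum_distrib_left v_row norm_mult power_mult_distrib)
  also have "\<dots> \<le> (\<Sum>l\<in>L. (norm (v l))\<^sup>2)"
    using assms(1,3) by (intro sum_mono2) auto
  also have "\<dots> = real (card B)"
    unfolding v_def using sum_norm_square_orthonormal_columns[OF \<open>finite B\<close> orth]
    by (simp add: unimodular)
  finally show ?thesis
    by (cases "card B = 0") (auto simp: power2_eq_square mult.assoc)
qed

lemma sum_le_card_image_if_fibre_sums_le_1:
  fixes f :: "'a \<Rightarrow> real"
  assumes "finite L"
    and fibres: "\<forall>l0\<in>L. (\<Sum>l\<in>{l\<in>L. g l = g l0}. f l) \<le> 1"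
  shows "(\<Sum>l\<in>L. f l) \<le> card (g ` L)"
proof -
  have "(\<Sum>l\<in>L. f l) = (\<Sum>c\<in>g ` L. \<Sum>l\<in>{l\<in>L. g l = c}. f l)"
    using \<open>finite L\<close> by (simp add: sum.group)
  also have "\<dots> \<le> (\<Sum>c\<in>g ` L. 1)"
    using fibres by (intro sum_mono) auto
  finally show ?thesis
    by simp
qed

lemma det_of_int_matrix:
  fixes A :: "int^'n^'n"
  shows "det (\<chi> i j. (of_int (A$i$j) :: 'a::comm_ring_1)) = of_int (det A)"
  by (simp add: det_def of_int_sum of_int_prod)

lemma det_uminus:
  fixes A :: "'a::comm_ring_1^'n^'n"
  shows "det (- A) = (-1)^CARD('n) * det A"
proof -
  have "(\<Prod>i\<in>UNIV. - A $ i $ p i) = (-1)^CARD('n) * (\<Prod>i\<in>UNIV. A $ i $ p i)" for p :: "'n \<Rightarrow> 'n"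
    by (simp add: prod.distrib[symmetric] prod_constant[symmetric] del: prod_constant)
  then show ?thesis
    by (simp add: det_def sum_distrib_left algebra_simps)
qed

lemma expansive_imp_invertible:
  fixes R :: "int^'n^'n"
  assumes "expansive R"
  shows "invertible (rmat R)"
proof -
  have "det (mat 0 - cmat R) \<noteq> 0"
    using assms unfolding expansive_def by (metis norm_zero not_one_less_zero)
  moreover have "mat 0 - cmat R = - cmat R"
    by (simp add: vec_eq_iff mat_def)
  ultimately have "det (cmat R) \<noteq> 0"
    by (simp add: det_uminus)
  moreover have "det (cmat R) = of_int (det R)" "det (rmat R) = of_int (det R)"
    unfolding cmat_def rmat_def by (rule det_of_int_matrix)+
  ultimately show ?thesis
    by (simp add: invertible_det_nz)
qed

lemma matrix_inv_transpose:
  fixes A :: "'a::field^'n^'n"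
  assumes "invertible A"
  shows "matrix_inv (transpose A) = transpose (matrix_inv A)"
proof -
  have "A ** matrix_inv A = mat 1" "matrix_inv A ** A = mat 1"
    using assms unfolding invertible_def matrix_inv_def by (metis (mono_tags, lifting) someI_ex)+
  then have t: "transpose A ** transpose (matrix_inv A) = mat 1"
      "transpose (matrix_inv A) ** transpose A = mat 1"
    by (metis matrix_transpose_mul transpose_mat)+
  then have "invertible (transpose A)"
    unfolding invertible_def by blast
  then have "transpose A ** matrix_inv (transpose A) = mat 1"
    unfolding invertible_def matrix_inv_def by (metis (mono_tags, lifting) someI_ex)
  then have "(transpose (matrix_inv A) ** transpose A) ** matrix_inv (transpose A) = transpose (matrix_inv A)"
    by (simp add: matrix_mul_assoc[symmetric])
  with t show ?thesis
    by simp
qed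

lemma inner_matrix_inv_transpose:
  fixes A :: "real^'n^'n"
  assumes "invertible A"
  shows "(matrix_inv (transpose A) *v x) \<bullet> y = x \<bullet> (matrix_inv A *v y)"
  by (simp add: matrix_inv_transpose[OF assms] dot_lmul_matrix)

lemma rvec_diff: "rvec (k - l) = rvec k - rvec l"
  by (simp add: rvec_def vec_eq_iff)

lemma rvec_0 [simp]: "rvec 0 = 0"
  by (simp add: rvec_def vec_eq_iff)

lemma cls_refl: "k \<in> cls R B k"
  by (simp add: cls_def)

definition dual_character :: "int^'n^'n \<Rightarrow> int^'n \<Rightarrow> int^'n \<Rightarrow> complex" where
  "dual_character R l b = cis (2 * pi * ((matrix_inv (transpose (rmat R)) *v rvec l) \<bullet> rvec b))"

lemma norm_dual_character [simp]: "norm (dual_character R l b) = 1"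
  by (simp add: dual_character_def)

lemma dual_character_0_right [simp]: "dual_character R l 0 = 1"
  by (simp add: dual_character_def)

lemma dual_character_cls:
  assumes "invertible (rmat R)" "l \<in> cls R B l0" "b \<in> B"
  shows "dual_character R l b = dual_character R l0 b"
proof -
  define k where "k = rvec (l - l0) \<bullet> (matrix_inv (rmat R) *v rvec b)"
  have "k \<in> \<int>"
    using assms(2,3) unfolding cls_def k_def by blast
  have "(matrix_inv (transpose (rmat R)) *v rvec l) \<bullet> rvec b
      = (matrix_inv (transpose (rmat R)) *v rvec l0) \<bullet> rvec b + k"
    unfolding k_def inner_matrix_inv_transpose[OF assms(1)] rvec_diff
    by (simp add: inner_diff_left)
  then show ?thesis
    using \<open>k \<in> \<int>\<close> by (simp add: dual_character_def distrib_left cis_mult[symmetric])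
qed

theorem proposition3p9:
  fixes R :: "int^'n^'n" and B L :: "(int^'n) set" and \<alpha> :: "int^'n \<Rightarrow> complex"
  assumes "expansive R"
    and "finite B" and "0 \<in> B"
    and "finite L" and "0 \<in> L"
    and "\<forall>l\<in>L. \<alpha> l \<noteq> 0"
    and "\<forall>b\<in>B. \<forall>b'\<in>B.
          (\<Sum>l\<in>L.
             ((1 / sqrt (real (card B))) *
               cis (2 * pi * ((matrix_inv (transpose (rmat R)) *v rvec l) \<bullet> rvec b)) * \<alpha> l)
           * cnj ((1 / sqrt (real (card B))) *
               cis (2 * pi * ((matrix_inv (transpose (rmat R)) *v rvec l) \<bullet> rvec b')) * \<alpha> l))
          = (if b = b' then 1 else 0)"
  shows "card B \<le> card (cls R B ` L) \<and>
         (\<forall>l0\<in>L. (\<Sum>l\<in>{l\<in>L. l \<in> cls R B l0}. (norm (\<alpha> l))\<^sup>2) \<le> 1)"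
proof -
  define s where "s = complex_of_real (1 / sqrt (real (card B)))"
  define m where "m l b = dual_character R l b * (s * \<alpha> l)" for l b
  have orth: "\<forall>b\<in>B. \<forall>b'\<in>B. (\<Sum>l\<in>L. m l b * cnj (m l b')) = (if b = b' then 1 else 0)"
    using assms(7) unfolding m_def s_def dual_character_def by (simp add: ac_simps)
  have "card B > 0"
    using assms(2,3) card_gt_0_iff by blast
  then have norm_s\<alpha>: "(norm (s * \<alpha> l))\<^sup>2 = (norm (\<alpha> l))\<^sup>2 / card B" for l
    by (simp add: s_def norm_divide power_divide)
  have class_bound: "(\<Sum>l\<in>{l\<in>L. l \<in> cls R B l0}. (norm (\<alpha> l))\<^sup>2) \<le> 1" for l0
  proof -
    have "\<forall>l\<in>{l\<in>L. l \<in> cls R B l0}. \<forall>b\<in>B. m l b = dual_character R l0 b * (s * \<alpha> l)"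
      using dual_character_cls[OF expansive_imp_invertible[OF assms(1)]] by (auto simp: m_def)
    from sum_norm_square_rows_common_phase_le[OF assms(4,2) _ orth this]
    have "real (card B) * (\<Sum>l\<in>{l\<in>L. l \<in> cls R B l0}. (norm (s * \<alpha> l))\<^sup>2) \<le> 1"
      by simp
    then show ?thesis
      using \<open>card B > 0\<close> by (simp add: norm_s\<alpha> sum_divide_distrib[symmetric])
  qed
  have fibre_bound: "(\<Sum>l\<in>{l\<in>L. cls R B l = cls R B l0}. (norm (\<alpha> l))\<^sup>2) \<le> 1" for l0
  proof -
    have "(\<Sum>l\<in>{l\<in>L. cls R B l = cls R B l0}. (norm (\<alpha> l))\<^sup>2)
        \<le> (\<Sum>l\<in>{l\<in>L. l \<in> cls R B l0}. (norm (\<alpha> l))\<^sup>2)"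
      using assms(4) cls_refl by (intro sum_mono2) auto
    then show ?thesis
      using class_bound[of l0] by linarith
  qed
  have "(\<Sum>l\<in>L. (norm (s * \<alpha> l))\<^sup>2) = 1"
    using sum_norm_square_orthonormal_column[OF assms(3) orth] by (simp add: m_def)
  then have "real (card B) = (\<Sum>l\<in>L. (norm (\<alpha> l))\<^sup>2)"
    using \<open>card B > 0\<close> by (simp add: norm_s\<alpha> sum_divide_distrib[symmetric])
  also have "\<dots> \<le> card (cls R B ` L)"
    using sum_le_card_image_if_fibre_sums_le_1[OF assms(4)] fibre_bound by blast
  finally show ?thesis
    using class_bound by simp
qed

end
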